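(* Let $(V,E_1)$ and $(V,E_2)$ be finite graphs on the same vertex set $V$ and let $0\le\lambda<1$, $0\le\varepsilon<1$ be constants. Denote by $m_i(v)$ the degree of $v$ in $(V,E_i)$. Assume that $(V,E_1\cup E_2)$ is connected and that the second largest eigenvalue of the random walk on it is less than $\lambda$. If for every $v\in V$, $\frac{m_2(v)}{m_1(v)}\le\varepsilon<\frac{1-\lambda}{4}$, then $(V,E_1)$ is connected and the second largest eigenvalue of the random walk on it is less than $\lambda+4\varepsilon$.
   Context: The random walk on a finite graph $(V,E)$ is the operator $(A\phi)(v)=\frac1{m(v)}\sum_{u:\{u,v\}\in E}\phi(u)$, where $m(v)$ is the degree of $v$ (edges counted with multiplicity; in $(V,E_1\cup E_2)$ the degree is $m_1(v)+m_2(v)$); it is self-adjoint with respect to the inner product $\langle\phi,\psi\rangle=\sum_v m(v)\phi(v)\overline{\psi(v)}$, with eigenvalues in $[-1,1]$, the largest being $1$. *)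

theory Defs
  imports "Jordan_Normal_Form.Char_Poly" "HOL-Library.Multiset"
begin

text \<open>A finite multigraph on the vertex set V = {0..<n} is given by a symmetric
  edge-multiplicity function w, where w u v is the number of edges {u,v}
  (a loop {v,v} counts once towards the degree of v, so that the random walk
  operator is stochastic).  The union E1 \<union> E2 (with multiplicity)
  corresponds to w1 + w2.\<close>

definition multigraph :: "nat \<Rightarrow> (nat \<Rightarrow> nat \<Rightarrow> nat) \<Rightarrow> bool" where
  "multigraph n w \<longleftrightarrow> (\<forall>u v. w u v = w v u) \<and> (\<forall>u v. n \<le> u \<or> n \<le> v \<longrightarrow> w u v = 0)"

definition degree :: "nat \<Rightarrow> (nat \<Rightarrow> nat \<Rightarrow> nat) \<Rightarrow> nat \<Rightarrow> nat" where
  "degree n w v = (\<Sum>u<n. w v u)"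

definition adj_rel :: "nat \<Rightarrow> (nat \<Rightarrow> nat \<Rightarrow> nat) \<Rightarrow> (nat \<times> nat) set" where
  "adj_rel n w = {(u, v). u < n \<and> v < n \<and> 0 < w u v}"

definition graph_connected :: "nat \<Rightarrow> (nat \<Rightarrow> nat \<Rightarrow> nat) \<Rightarrow> bool" where
  "graph_connected n w \<longleftrightarrow> (\<forall>u<n. \<forall>v<n. (u, v) \<in> (adj_rel n w)\<^sup>*)"

definition walk_matrix :: "nat \<Rightarrow> (nat \<Rightarrow> nat \<Rightarrow> nat) \<Rightarrow> real mat" where
  "walk_matrix n w = mat n n (\<lambda>(i, j). real (w i j) / real (degree n w i))"

text \<open>Eigenvalues of the random walk, counted with multiplicity, in decreasing order.
  (The operator is self-adjoint for the degree-weighted inner product, so all roots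
  of the characteristic polynomial are real.)\<close>
definition walk_eigenvalues :: "nat \<Rightarrow> (nat \<Rightarrow> nat \<Rightarrow> nat) \<Rightarrow> real list" where
  "walk_eigenvalues n w = rev (sorted_list_of_multiset (proots (char_poly (walk_matrix n w))))"

definition second_eigenvalue :: "nat \<Rightarrow> (nat \<Rightarrow> nat \<Rightarrow> nat) \<Rightarrow> real" where
  "second_eigenvalue n w = walk_eigenvalues n w ! 1"

end

(* The random walk matrix D^-1 W is similar to the symmetric matrix D^-1/2 W D^-1/2, so it has
   an orthonormal eigenbasis and its eigenvalues are governed by the Rayleigh quotients of the
   forms <A phi, phi> = sum w(u,v) phi(u) phi(v) and <phi, phi> = sum m(v) phi(v)^2.
   Let phi be nonzero and orthogonal to the degrees m = m1 + m2 of the union.  The bound on the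
   second eigenvalue of the union gives <A phi, phi> < lam <phi, phi>.  Deleting E2 lowers the
   form by at most <phi, phi>_2 (as sum w2(u,v) (phi(u) + phi(v))^2 >= 0), and
   <phi, phi>_2 <= eps <phi, phi>_1, so <A1 phi, phi> < (lam + 2 eps) <phi, phi>_1 on a
   hyperplane; by Courant-Fischer the second eigenvalue of (V,E1) is below lam + 2 eps, which is
   less than 1.  A disconnected graph carries a nonzero function that is constant on components
   and orthogonal to the degrees; its Rayleigh quotient is 1, so connectivity follows. *)

theory Submission
  imports Defs "Jordan_Normal_Form.Schur_Decomposition"
begin

section \<open>Spectral theorem for real symmetric matrices\<close>

lemma symmetric_mat_eigenvalue_real:
  fixes S :: "real mat" and a :: complex
  assumes S: "S \<in> carrier_mat n n" and sym: "S\<^sup>T = S"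
    and ev: "eigenvalue (map_mat complex_of_real S) a"
  shows "Im a = 0"
proof -
  have S_sym: "S $$ (j,i) = S $$ (i,j)" if "i < n" "j < n" for i j
    using arg_cong[OF sym, of "\<lambda>M. M $$ (i,j)"] S that by simp
  from ev obtain v where v: "v \<in> carrier_vec n" "v \<noteq> 0\<^sub>v n"
    and eigen: "map_mat complex_of_real S *\<^sub>v v = a \<cdot>\<^sub>v v"
    unfolding eigenvalue_def eigenvector_def using S by auto
  have row: "(\<Sum>j<n. of_real (S $$ (i,j)) * v $ j) = a * v $ i" if "i < n" for i
    using arg_cong[OF eigen, of "\<lambda>u. u $ i"] that S v(1)
    by (auto simp: mult_mat_vec_def scalar_prod_def lessThan_atLeast0 intro: sum.cong)
  define q where "q = (\<Sum>i<n. \<Sum>j<n. cnj (v $ i) * of_real (S $$ (i,j)) * v $ j)"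
  define N where "N = (\<Sum>i<n. (cmod (v $ i))\<^sup>2)"
  \<comment> \<open>the form \<open>v\<^sup>* S v\<close> equals \<open>a |v|\<^sup>2\<close>, and it is real because \<open>S\<close> is
    real symmetric\<close>
  have "q = a * of_real N"
  proof -
    have "q = (\<Sum>i<n. cnj (v $ i) * (a * v $ i))"
      unfolding q_def by (simp add: row mult.assoc flip: sum_distrib_left)
    also have "\<dots> = a * of_real N"
      unfolding N_def of_real_sum sum_distrib_left
      by (intro sum.cong refl) (metis complex_norm_square mult.commute mult.left_commute)
    finally show ?thesis .
  qed
  moreover have "cnj q = q"
  proof -
    have "cnj q = (\<Sum>j<n. \<Sum>i<n. cnj (v $ j) * of_real (S $$ (j,i)) * v $ i)"
      unfolding q_def by (subst sum.swap) (auto simp: S_sym mult.commute mult.left_commute intro!: sum.cong)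
    then show ?thesis unfolding q_def .
  qed
  moreover have "N > 0"
  proof -
    from v obtain i where i: "i < n" "v $ i \<noteq> 0" by (metis eq_vecI carrier_vecD index_zero_vec)
    have "(cmod (v $ i))\<^sup>2 \<le> N" unfolding N_def by (rule member_le_sum) (use i in auto)
    moreover have "0 < (cmod (v $ i))\<^sup>2" using i(2) by simp
    ultimately show ?thesis by linarith
  qed
  moreover have "Im q = 0" using \<open>cnj q = q\<close> by (metis cnj.sel(2) neg_equal_zero)
  ultimately show ?thesis by simp
qed

lemma symmetric_mat_char_poly_splits:
  fixes S :: "real mat"
  assumes S: "S \<in> carrier_mat n n" and sym: "S\<^sup>T = S"
  shows "\<exists>es. char_poly S = (\<Prod>e\<leftarrow>es. [:-e, 1:]) \<and> length es = n"
proof -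
  let ?C = "map_mat complex_of_real S"
  have C: "?C \<in> carrier_mat n n" using S by simp
  from char_poly_factorized[OF C] obtain as
    where cp: "char_poly ?C = (\<Prod>a\<leftarrow>as. [:- a, 1:])" and len: "length as = n" by blast
  have real: "of_real (Re a) = a" if "a \<in> set as" for a
  proof -
    have "poly (char_poly ?C) a = 0" unfolding cp using that by (induct as) auto
    then have "eigenvalue ?C a" using eigenvalue_root_char_poly[OF C] by simp
    then show ?thesis using symmetric_mat_eigenvalue_real[OF S sym] by (simp add: complex_eq_iff)
  qed
  interpret of_real_poly: map_poly_inj_comm_ring_hom complex_of_real ..
  have "map_poly complex_of_real (\<Prod>e\<leftarrow>map Re as. [:-e, 1:]) = (\<Prod>a\<leftarrow>as. [:- a, 1:])"
    using real
  proof (induct as)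
    case (Cons a as)
    then have "map_poly complex_of_real [:-Re a, 1:] = [:-a, 1:]" by simp
    with Cons show ?case by (simp only: list.map prod_list.Cons of_real_poly.hom_mult) simp
  qed simp
  also have "\<dots> = map_poly complex_of_real (char_poly S)"
    using cp of_real_hom.char_poly_hom[OF S] by metis
  finally have "char_poly S = (\<Prod>e\<leftarrow>map Re as. [:-e, 1:])"
    by (metis of_real_poly.injectivity)
  with len show ?thesis by (intro exI[of _ "map Re as"]) simp
qed

lemma orthonormal_basis_completion:
  fixes v :: "real vec"
  assumes v: "v \<in> carrier_vec n" and unit: "v \<bullet> v = 1"
  shows "\<exists>W \<in> carrier_mat n n. W\<^sup>T * W = 1\<^sub>m n \<and> col W 0 = v"
proof -
  interpret cof_vec_space n "TYPE(real)" .
  have "v \<noteq> 0\<^sub>v n" using v unit by auto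
  note basis = basis_completion[OF v this]
  obtain vs where b: "basis_completion v = v # vs"
    unfolding basis_completion_def Let_def by blast
  define us where "us = gram_schmidt n (basis_completion v)"
  from gram_schmidt_result[OF basis(2,4,5) us_def]
  have us: "corthogonal us" "set us \<subseteq> carrier_vec n" "length us = n"
    using basis(6) by auto
  have hd_us: "hd us = v" unfolding us_def b using v by simp
  have n: "n > 0" using v unit by (cases n) (auto simp: scalar_prod_def)
  define ws where "ws = map (\<lambda>u. (1 / sqrt (u \<bullet> u)) \<cdot>\<^sub>v u) us"
  define W where "W = mat_of_cols n ws"
  have us_i: "us ! i \<in> carrier_vec n" if "i < n" for i using us that by auto
  have col_W: "col W j = ws ! j" if "j < n" for j
    unfolding W_def ws_def using that us(3) us_i by simp
  have ws_dot: "ws ! i \<bullet> ws ! j = (if i = j then 1 else 0)" if "i < n" "j < n" for i j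
  proof -
    have orth: "us ! i \<bullet> us ! j = 0 \<longleftrightarrow> i \<noteq> j"
      using corthogonalD[OF us(1), of i j] that us(3) by simp
    have "us ! i \<bullet> us ! i \<ge> 0" by (simp add: scalar_prod_def sum_nonneg)
    moreover have "ws ! i \<bullet> ws ! j
        = (us ! i \<bullet> us ! j) / (sqrt (us ! i \<bullet> us ! i) * sqrt (us ! j \<bullet> us ! j))"
      unfolding ws_def using that us(3) us_i[OF that(1)] us_i[OF that(2)] by simp
    ultimately show ?thesis using orth by auto
  qed
  have "W \<in> carrier_mat n n" unfolding W_def using mat_of_cols_carrier(1)[of n ws] us(3) by (simp add: ws_def)
  moreover have "W\<^sup>T * W = 1\<^sub>m n"
    by (rule eq_matI) (use \<open>W \<in> carrier_mat n n\<close> in \<open>auto simp: col_W ws_dot\<close>)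
  moreover have "col W 0 = v"
    using col_W[OF n] hd_us unit us(3) n unfolding ws_def by (cases us) auto
  ultimately show ?thesis by blast
qed

lemma unit_eigenvector:
  fixes A :: "real mat"
  assumes A: "A \<in> carrier_mat n n" and "eigenvalue A e"
  obtains v where "v \<in> carrier_vec n" "v \<bullet> v = 1" "A *\<^sub>v v = e \<cdot>\<^sub>v v"
proof -
  from assms obtain u where u: "u \<in> carrier_vec n" "u \<noteq> 0\<^sub>v n" "A *\<^sub>v u = e \<cdot>\<^sub>v u"
    unfolding eigenvalue_def eigenvector_def by auto
  have "u \<bullet> u > 0" using conjugate_square_greater_0_vec[OF u(1)] u(2) by simp
  then show ?thesis
    using u A by (intro that[of "(1 / sqrt (u \<bullet> u)) \<cdot>\<^sub>v u"])
      (auto simp: mult_mat_vec smult_smult_assoc mult.commute)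
qed

lemma orthogonal_similar:
  fixes A W :: "real mat"
  assumes A: "A \<in> carrier_mat n n" and W: "W \<in> carrier_mat n n" and orth: "W\<^sup>T * W = 1\<^sub>m n"
  shows "similar_mat_wit A (W\<^sup>T * A * W) W W\<^sup>T"
proof (rule similar_mat_witI[of _ _ n])
  show "W * W\<^sup>T = 1\<^sub>m n" using mat_mult_left_right_inverse[OF _ W orth] W by simp
  moreover have "W * (W\<^sup>T * A * W) * W\<^sup>T = (W * W\<^sup>T) * A * (W * W\<^sup>T)"
    using A W by (simp add: assoc_mult_mat[of _ n n _ n _ n])
  ultimately show "A = W * (W\<^sup>T * A * W) * W\<^sup>T" using A by simp
qed (use A W orth in auto)

lemma orthogonal_deflation:
  fixes A :: "real mat"
  assumes A: "A \<in> carrier_mat n n" and e: "eigenvalue A e"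
  obtains W A2 A3 where
    "similar_mat_wit A (four_block_mat (mat 1 1 (\<lambda>_. e)) A2 (0\<^sub>m (n - 1) 1) A3) W W\<^sup>T"
    "A2 \<in> carrier_mat 1 (n - 1)" "A3 \<in> carrier_mat (n - 1) (n - 1)"
proof -
  obtain v where v: "v \<in> carrier_vec n" "v \<bullet> v = 1" and eigen: "A *\<^sub>v v = e \<cdot>\<^sub>v v"
    using unit_eigenvector[OF A e] .
  have n: "n > 0" using v by (cases n) (auto simp: scalar_prod_def)
  from orthonormal_basis_completion[OF v] obtain W
    where W: "W \<in> carrier_mat n n" and orth: "W\<^sup>T * W = 1\<^sub>m n" and col_W: "col W 0 = v" by blast
  define A' where "A' = W\<^sup>T * A * W"
  have A': "A' \<in> carrier_mat n n" unfolding A'_def using A W by simp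
  have "col A' 0 = (W\<^sup>T * A) *\<^sub>v v"
    unfolding A'_def by (subst col_mult2[of _ n n]) (use A W n col_W in auto)
  also have "\<dots> = W\<^sup>T *\<^sub>v (A *\<^sub>v v)"
    using A W v by (simp add: assoc_mult_mat_vec[of _ n n _ n])
  also have "\<dots> = e \<cdot>\<^sub>v (W\<^sup>T *\<^sub>v v)"
    using W v by (simp add: eigen mult_mat_vec)
  also have "W\<^sup>T *\<^sub>v v = unit_vec n 0"
    using W n col_W col_mult2[of "W\<^sup>T" n n W n 0] by (simp add: orth)
  finally have col0: "col A' 0 = e \<cdot>\<^sub>v unit_vec n 0" .
  obtain A1 A2 A0 A3 where split: "split_block A' 1 1 = (A1, A2, A0, A3)"
    by (cases "split_block A' 1 1") auto
  from A' n have "dim_row A' = 1 + (n - 1)" "dim_col A' = 1 + (n - 1)" by auto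
  from split_block[OF split this] have blocks: "A2 \<in> carrier_mat 1 (n - 1)"
    "A3 \<in> carrier_mat (n - 1) (n - 1)" "A' = four_block_mat A1 A2 A0 A3" by auto
  have "A1 = mat 1 1 (\<lambda>_. e)"
    using split[unfolded split_block_def Let_def] arg_cong[OF col0, of "\<lambda>x. x $ 0"] A' n
    by (auto simp: col_def)
  moreover have "A' $$ (Suc i, 0) = 0" if "i < n - 1" for i
    using arg_cong[OF col0, of "\<lambda>x. x $ Suc i"] A' that by auto
  then have "A0 = 0\<^sub>m (n - 1) 1"
    using split[unfolded split_block_def Let_def] A' by auto
  ultimately show ?thesis
    using that orthogonal_similar[OF A W orth] blocks unfolding A'_def by simp
qed

lemma similar_mat_wit_orthogonal_four_block:
  fixes P :: "real mat"
  assumes sim: "similar_mat_wit A3 B P P\<^sup>T" and A1: "A1 \<in> carrier_mat k k"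
    and A2: "A2 \<in> carrier_mat k m" and A3: "A3 \<in> carrier_mat m m"
  defines "Q \<equiv> four_block_mat (1\<^sub>m k) (0\<^sub>m k m) (0\<^sub>m m k) P"
  shows "similar_mat_wit (four_block_mat A1 A2 (0\<^sub>m m k) A3)
    (four_block_mat A1 (A2 * P) (0\<^sub>m m k) B) Q Q\<^sup>T"
proof -
  from similar_mat_witD2[OF A3 sim] have P: "P \<in> carrier_mat m m"
    and PPT: "P * P\<^sup>T = 1\<^sub>m m" by auto
  have QT: "Q\<^sup>T = four_block_mat (1\<^sub>m k) (0\<^sub>m k m) (0\<^sub>m m k) P\<^sup>T"
    unfolding Q_def using transpose_four_block_mat[of "1\<^sub>m k" k k "0\<^sub>m k m" m "0\<^sub>m m k" m P] P
    by simp
  have A2_eq: "A2 = 1\<^sub>m k * (A2 * P) * P\<^sup>T"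
    using A2 P PPT by (simp add: assoc_mult_mat[of _ k m _ m _ m])
  have zero_eq: "0\<^sub>m m k = P * 0\<^sub>m m k * 1\<^sub>m k" using P by simp
  show ?thesis
    unfolding QT unfolding Q_def
    by (rule similar_mat_wit_four_block[OF similar_mat_wit_refl[OF A1] sim A2_eq zero_eq])
      (use A1 A2 A3 P in auto)
qed

theorem orthogonal_schur_decomposition:
  fixes A :: "real mat"
  assumes "A \<in> carrier_mat n n" and "char_poly A = (\<Prod>e\<leftarrow>es. [:-e, 1:])"
  shows "\<exists>B P. similar_mat_wit A B P P\<^sup>T \<and> upper_triangular B \<and> diag_mat B = es"
  using assms
proof (induct es arbitrary: n A)
  case Nil
  with degree_monic_char_poly[of A n] show ?case
    by (intro exI[of _ A] exI[of _ "1\<^sub>m n"]) (auto intro: similar_mat_wit_refl simp: diag_mat_def)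
next
  case (Cons e es n A)
  let ?A1 = "mat 1 1 (\<lambda>_. e) :: real mat"
  have "eigenvalue A e"
    using Cons.prems by (simp add: eigenvalue_root_char_poly)
  from orthogonal_deflation[OF Cons.prems(1) this] obtain W A2 A3
    where sim_W: "similar_mat_wit A (four_block_mat ?A1 A2 (0\<^sub>m (n - 1) 1) A3) W W\<^sup>T"
      and A2: "A2 \<in> carrier_mat 1 (n - 1)" and A3: "A3 \<in> carrier_mat (n - 1) (n - 1)" .
  from similar_mat_witD2[OF Cons.prems(1) sim_W] have W: "W \<in> carrier_mat n n" by auto
  have "char_poly A = char_poly ?A1 * char_poly A3"
    using char_poly_similar sim_W char_poly_four_block_zeros_col[OF _ A2 A3]
    unfolding similar_mat_def by fastforce
  also have "char_poly ?A1 = [:-e, 1:]"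
    by (simp add: char_poly_defs det_def sign_def)
  finally have "[:-e, 1:] * char_poly A3 = [:-e, 1:] * (\<Prod>e\<leftarrow>es. [:-e, 1:])"
    using Cons.prems(2) by simp
  then have "char_poly A3 = (\<Prod>e\<leftarrow>es. [:-e, 1:])"
    by (subst (asm) mult_cancel_left) simp
  from Cons.hyps[OF A3 this] obtain B P where
    sim_P: "similar_mat_wit A3 B P P\<^sup>T" and ut: "upper_triangular B" and diag: "diag_mat B = es"
    by blast
  from similar_mat_witD2[OF A3 sim_P] have B: "B \<in> carrier_mat (n - 1) (n - 1)"
    and P: "P \<in> carrier_mat (n - 1) (n - 1)" by auto
  let ?Q = "four_block_mat (1\<^sub>m 1) (0\<^sub>m 1 (n - 1)) (0\<^sub>m (n - 1) 1) P"
  let ?B = "four_block_mat ?A1 (A2 * P) (0\<^sub>m (n - 1) 1) B"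
  have "1 + (n - 1) = n" using similar_mat_witD2(5)[OF Cons.prems(1) sim_W] A3 by auto
  then have Q: "?Q \<in> carrier_mat n n"
    using four_block_carrier_mat[of "1\<^sub>m 1" 1 1 P "n - 1" "n - 1"] P by simp
  have "similar_mat_wit A ?B (W * ?Q) (W * ?Q)\<^sup>T"
    unfolding transpose_mult[OF W Q]
    by (rule similar_mat_wit_trans[OF sim_W similar_mat_wit_orthogonal_four_block[OF sim_P _ A2 A3]])
      simp
  moreover have "upper_triangular ?B"
    by (rule upper_triangular_four_block[OF _ B _ ut]) auto
  moreover have "diag_mat ?B = e # es"
    using diag_four_block_mat[OF _ B, of ?A1 1] diag by (simp add: diag_mat_def)
  ultimately show ?case by blast
qed

lemma symmetric_upper_triangular_offdiag:
  assumes B: "B \<in> carrier_mat n n" and sym: "B\<^sup>T = B" and ut: "upper_triangular B"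
    and "i < n" "j < n" "i \<noteq> j"
  shows "B $$ (i, j) = 0"
proof (cases "j < i")
  case False
  then have "B $$ (j, i) = 0" using ut B assms(4-6) unfolding upper_triangular_def by auto
  then show ?thesis using arg_cong[OF sym, of "\<lambda>M. M $$ (i, j)"] B assms(4,5) by simp
qed (use ut B assms(4) in \<open>auto simp: upper_triangular_def\<close>)

theorem symmetric_mat_spectral:
  fixes S :: "real mat"
  assumes S: "S \<in> carrier_mat n n" and sym: "S\<^sup>T = S"
    and cp: "char_poly S = (\<Prod>e\<leftarrow>es. [:-e, 1:])"
  obtains P where "P \<in> carrier_mat n n" "P\<^sup>T * P = 1\<^sub>m n" "P * P\<^sup>T = 1\<^sub>m n"
    "S * P = P * mat_diag n (\<lambda>i. es ! i)"
proof -
  from orthogonal_schur_decomposition[OF S cp] obtain B P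
    where sim: "similar_mat_wit S B P P\<^sup>T" and ut: "upper_triangular B" and diag: "diag_mat B = es"
    by blast
  from similar_mat_witD2[OF S sim] have B: "B \<in> carrier_mat n n" and P: "P \<in> carrier_mat n n"
    and PPT: "P * P\<^sup>T = 1\<^sub>m n" and PTP: "P\<^sup>T * P = 1\<^sub>m n" and S_eq: "S = P * B * P\<^sup>T" by auto
  note assoc = assoc_mult_mat[of _ n n _ n _ n]
  have "P\<^sup>T * S * P = (P\<^sup>T * P) * B * (P\<^sup>T * P)"
    unfolding S_eq using P B by (simp add: assoc)
  then have B_eq: "B = P\<^sup>T * S * P" using PTP B by simp
  have "B\<^sup>T = B"
    unfolding B_eq using P S by (simp add: transpose_mult[of _ n n _ n] sym assoc)
  then have "B = mat_diag n (\<lambda>i. es ! i)"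
    using symmetric_upper_triangular_offdiag[OF B _ ut] diag B
    by (auto simp: mat_diag_def diag_mat_def)
  moreover have "S * P = P * B * (P\<^sup>T * P)" unfolding S_eq using P B by (simp add: assoc)
  then have "S * P = P * B" using PTP P B by simp
  ultimately show ?thesis using that P PTP PPT by simp
qed

locale orthonormal_eigenbasis =
  fixes n :: nat and S P :: "nat \<Rightarrow> nat \<Rightarrow> real" and L :: "real list"
  assumes orthonormal_cols: "\<And>i j. i < n \<Longrightarrow> j < n \<Longrightarrow> (\<Sum>k<n. P k i * P k j) = (if i = j then 1 else 0)"
    and orthonormal_rows: "\<And>i j. i < n \<Longrightarrow> j < n \<Longrightarrow> (\<Sum>k<n. P i k * P j k) = (if i = j then 1 else 0)"
    and eigenvectors: "\<And>i j. i < n \<Longrightarrow> j < n \<Longrightarrow> (\<Sum>k<n. S i k * P k j) = L ! j * P i j"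

lemma symmetric_mat_orthonormal_eigenbasis:
  fixes S :: "real mat"
  assumes S: "S \<in> carrier_mat n n" and "S\<^sup>T = S" and "char_poly S = (\<Prod>e\<leftarrow>es. [:-e, 1:])"
  shows "\<exists>P. orthonormal_eigenbasis n (\<lambda>i j. S $$ (i, j)) P es"
proof -
  obtain P where P: "P \<in> carrier_mat n n" and PTP: "P\<^sup>T * P = 1\<^sub>m n" and PPT: "P * P\<^sup>T = 1\<^sub>m n"
    and SP: "S * P = P * mat_diag n (\<lambda>i. es ! i)"
    using symmetric_mat_spectral[OF assms] .
  have entry: "(X * Y) $$ (i, j) = (\<Sum>k<n. X $$ (i, k) * Y $$ (k, j))"
    if "X \<in> carrier_mat n n" "Y \<in> carrier_mat n n" "i < n" "j < n" for X Y :: "real mat" and i j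
    using that by (simp add: scalar_prod_def lessThan_atLeast0)
  show ?thesis
  proof (intro exI[of _ "\<lambda>i j. P $$ (i, j)"] orthonormal_eigenbasis.intro)
    fix i j assume ij: "i < n" "j < n"
    show "(\<Sum>k<n. P $$ (k, i) * P $$ (k, j)) = (if i = j then 1 else 0)"
      using arg_cong[OF PTP, of "\<lambda>M. M $$ (i, j)"] entry[of "P\<^sup>T" P i j] P ij by auto
    show "(\<Sum>k<n. P $$ (i, k) * P $$ (j, k)) = (if i = j then 1 else 0)"
      using arg_cong[OF PPT, of "\<lambda>M. M $$ (i, j)"] entry[of P "P\<^sup>T" i j] P ij by auto
    show "(\<Sum>k<n. S $$ (i, k) * P $$ (k, j)) = es ! j * P $$ (i, j)"
      using arg_cong[OF SP, of "\<lambda>M. M $$ (i, j)"] entry[of S P i j] S P ij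
      by (simp add: mat_diag_mult_right[OF P] mult.commute)
  qed
qed

section \<open>Rayleigh quotients in an orthonormal eigenbasis\<close>

lemma sum_lessThan_supported_01:
  fixes f :: "nat \<Rightarrow> 'a :: comm_monoid_add"
  assumes "1 < n" and "\<And>i. 2 \<le> i \<Longrightarrow> f i = 0"
  shows "(\<Sum>i<n. f i) = f 0 + f 1"
proof -
  have "(\<Sum>i<n. f i) = (\<Sum>i\<in>{0, 1}. f i)"
    by (rule sum.mono_neutral_right) (use assms in auto)
  then show ?thesis by simp
qed

context orthonormal_eigenbasis
begin

definition coord :: "(nat \<Rightarrow> real) \<Rightarrow> nat \<Rightarrow> real" where
  "coord x i = (\<Sum>k<n. P k i * x k)"

lemma expansion: "j < n \<Longrightarrow> x j = (\<Sum>i<n. coord x i * P j i)"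
proof -
  assume j: "j < n"
  have "(\<Sum>i<n. coord x i * P j i) = (\<Sum>k<n. x k * (\<Sum>i<n. P k i * P j i))"
    unfolding coord_def sum_distrib_right sum_distrib_left
    by (subst sum.swap) (simp add: algebra_simps)
  also have "\<dots> = x j" using j by (simp add: orthonormal_rows if_distrib cong: if_cong)
  finally show ?thesis by simp
qed

lemma coord_unique:
  assumes x: "\<And>j. j < n \<Longrightarrow> x j = (\<Sum>l<n. y l * P j l)" and i: "i < n"
  shows "coord x i = y i"
proof -
  have "coord x i = (\<Sum>k<n. \<Sum>l<n. y l * (P k i * P k l))"
    unfolding coord_def using x by (simp add: sum_distrib_left algebra_simps)
  also have "\<dots> = (\<Sum>l<n. y l * (\<Sum>k<n. P k i * P k l))"
    by (subst sum.swap) (simp add: sum_distrib_left)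
  also have "\<dots> = y i" using i by (simp add: orthonormal_cols if_distrib cong: if_cong)
  finally show ?thesis .
qed

lemma parseval: "(\<Sum>j<n. x j * z j) = (\<Sum>i<n. coord x i * coord z i)"
proof -
  have "(\<Sum>j<n. x j * z j) = (\<Sum>j<n. x j * (\<Sum>i<n. coord z i * P j i))"
    by (intro sum.cong refl) (simp add: expansion[symmetric])
  also have "\<dots> = (\<Sum>i<n. coord z i * (\<Sum>j<n. P j i * x j))"
    unfolding sum_distrib_left by (subst sum.swap) (simp add: algebra_simps)
  finally show ?thesis unfolding coord_def by (simp add: mult.commute)
qed

lemma coord_apply: "i < n \<Longrightarrow> coord (\<lambda>j. \<Sum>k<n. S j k * x k) i = L ! i * coord x i"
proof (rule coord_unique)
  fix j assume j: "j < n"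
  have "(\<Sum>k<n. S j k * x k) = (\<Sum>k<n. S j k * (\<Sum>i<n. coord x i * P k i))"
    by (intro sum.cong refl) (simp add: expansion[symmetric])
  also have "\<dots> = (\<Sum>i<n. coord x i * (\<Sum>k<n. S j k * P k i))"
    unfolding sum_distrib_left by (subst sum.swap) (simp add: algebra_simps)
  also have "\<dots> = (\<Sum>i<n. L ! i * coord x i * P j i)"
    using j by (intro sum.cong refl) (simp add: eigenvectors)
  finally show "(\<Sum>k<n. S j k * x k) = (\<Sum>i<n. L ! i * coord x i * P j i)" .
qed

lemma quadratic_form_coord:
  "(\<Sum>j<n. x j * (\<Sum>k<n. S j k * x k)) = (\<Sum>i<n. L ! i * (coord x i)\<^sup>2)"
  unfolding parseval[of x "\<lambda>j. \<Sum>k<n. S j k * x k"]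
  by (intro sum.cong refl) (simp add: coord_apply power2_eq_square)

lemma sum_squares_coord: "(\<Sum>j<n. (x j)\<^sup>2) = (\<Sum>i<n. (coord x i)\<^sup>2)"
  using parseval[of x x] by (simp add: power2_eq_square)

lemma coord_nonzero:
  assumes "j < n" "x j \<noteq> 0" shows "\<exists>i<n. coord x i \<noteq> 0"
proof (rule ccontr)
  assume "\<not> ?thesis"
  then have "x j = 0" using expansion[OF assms(1), of x] by simp
  with assms(2) show False ..
qed

lemma quadratic_form_less_if_coord_0_eq_0:
  assumes sorted: "\<And>i j. i \<le> j \<Longrightarrow> j < n \<Longrightarrow> L ! j \<le> L ! i" and "L ! 1 < c"
    and coord_0: "coord x 0 = 0" and "\<exists>j<n. x j \<noteq> 0"
  shows "(\<Sum>j<n. x j * (\<Sum>k<n. S j k * x k)) < c * (\<Sum>j<n. (x j)\<^sup>2)"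
proof -
  have L_less: "L ! k < c" if "k \<noteq> 0" "k < n" for k
    using sorted[of 1 k] that \<open>L ! 1 < c\<close> by simp
  obtain i where i: "i < n" "coord x i \<noteq> 0" using coord_nonzero \<open>\<exists>j<n. x j \<noteq> 0\<close> by blast
  have "(\<Sum>i<n. L ! i * (coord x i)\<^sup>2) < (\<Sum>i<n. c * (coord x i)\<^sup>2)"
  proof (rule sum_strict_mono_ex1)
    show "\<forall>k\<in>{..<n}. L ! k * (coord x k)\<^sup>2 \<le> c * (coord x k)\<^sup>2"
    proof
      fix k assume "k \<in> {..<n}"
      then show "L ! k * (coord x k)\<^sup>2 \<le> c * (coord x k)\<^sup>2"
        using L_less[of k] coord_0 by (cases "k = 0") (auto intro: mult_right_mono)
    qed
    have "i \<noteq> 0" using i(2) coord_0 by metis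
    then show "\<exists>k\<in>{..<n}. L ! k * (coord x k)\<^sup>2 < c * (coord x k)\<^sup>2"
      using L_less[of i] i by (intro bexI[of _ i]) auto
  qed simp
  then show ?thesis
    unfolding quadratic_form_coord[of x] sum_squares_coord[of x] by (simp add: sum_distrib_left)
qed

lemma quadratic_form_less_on_complement:
  assumes sorted: "\<And>i j. i \<le> j \<Longrightarrow> j < n \<Longrightarrow> L ! j \<le> L ! i"
    and "L ! 1 < 1" and "L ! 1 < c"
    and fixed: "\<And>j. j < n \<Longrightarrow> (\<Sum>k<n. S j k * t k) = t j" and "\<exists>j<n. t j \<noteq> 0"
    and orth: "(\<Sum>j<n. x j * t j) = 0" and "\<exists>j<n. x j \<noteq> 0"
  shows "(\<Sum>j<n. x j * (\<Sum>k<n. S j k * x k)) < c * (\<Sum>j<n. (x j)\<^sup>2)"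
proof (rule quadratic_form_less_if_coord_0_eq_0)
  show "\<And>i j. i \<le> j \<Longrightarrow> j < n \<Longrightarrow> L ! j \<le> L ! i" by (fact sorted)
  show "L ! 1 < c" "\<exists>j<n. x j \<noteq> 0" by fact+
  have t_coord: "coord t i = 0" if "i < n" "i \<noteq> 0" for i
  proof -
    have "coord (\<lambda>j. \<Sum>k<n. S j k * t k) i = coord t i"
      unfolding coord_def by (intro sum.cong refl) (simp add: fixed)
    then have "(1 - L ! i) * coord t i = 0" using coord_apply[OF \<open>i < n\<close>] by (simp add: algebra_simps)
    moreover have "L ! i < 1" using sorted[of 1 i] that \<open>L ! 1 < 1\<close> by simp
    ultimately show ?thesis by simp
  qed
  obtain k where "k < n" "coord t k \<noteq> 0" using coord_nonzero \<open>\<exists>j<n. t j \<noteq> 0\<close> by blast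
  then have "coord t 0 \<noteq> 0" using t_coord by metis
  moreover have "0 < n" using \<open>\<exists>j<n. t j \<noteq> 0\<close> by auto
  then have "(\<Sum>j<n. x j * t j) = coord x 0 * coord t 0"
    unfolding parseval[of x t] by (subst sum.remove[of _ 0]) (auto simp: t_coord)
  ultimately show "coord x 0 = 0" using orth by simp
qed

lemma exists_quadratic_form_ge_second:
  assumes "1 < n" and sorted: "\<And>i j. i \<le> j \<Longrightarrow> j < n \<Longrightarrow> L ! j \<le> L ! i"
  obtains x where "(\<Sum>j<n. x j * t j) = 0" and "\<exists>j<n. x j \<noteq> 0"
    and "L ! 1 * (\<Sum>j<n. (x j)\<^sup>2) \<le> (\<Sum>j<n. x j * (\<Sum>k<n. S j k * x k))"
proof -
  \<comment> \<open>a nonzero vector in the span of the top two eigenvectors orthogonal to \<open>t\<close>\<close>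
  obtain y0 y1 where y: "y0 \<noteq> 0 \<or> y1 \<noteq> 0" "y0 * coord t 0 + y1 * coord t 1 = 0"
  proof (cases "coord t 0 = 0 \<and> coord t 1 = 0")
    case True
    then show ?thesis by (intro that[of 1 0]) auto
  next
    case False
    then show ?thesis by (intro that[of "coord t 1" "- coord t 0"]) auto
  qed
  define y where "y i = (if i = 0 then y0 else if i = 1 then y1 else 0)" for i :: nat
  define x where "x j = (\<Sum>l<n. y l * P j l)" for j
  have x_coord: "coord x i = y i" if "i < n" for i
    by (rule coord_unique[OF _ that]) (simp add: x_def)
  have sum_y: "(\<Sum>i<n. f i * g (y i)) = f 0 * g y0 + f 1 * g y1"
    if "g 0 = 0" for f :: "nat \<Rightarrow> real" and g :: "real \<Rightarrow> real"
  proof -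
    have "(\<Sum>i<n. f i * g (y i)) = f 0 * g (y 0) + f 1 * g (y 1)"
      by (rule sum_lessThan_supported_01[OF \<open>1 < n\<close>]) (simp add: y_def that)
    then show ?thesis by (simp add: y_def)
  qed
  show ?thesis
  proof
    show "(\<Sum>j<n. x j * t j) = 0"
      using sum_y[where f = "coord t" and g = "\<lambda>u. u"] y(2) unfolding parseval[of x t]
      by (simp add: x_coord mult.commute)
    show "\<exists>j<n. x j \<noteq> 0"
    proof (rule ccontr)
      assume "\<not> ?thesis"
      then have "coord x i = 0" for i by (simp add: coord_def)
      then show False using x_coord[of 0] x_coord[of 1] y(1) \<open>1 < n\<close> by (simp add: y_def)
    qed
    have "L ! 1 \<le> L ! 0" using sorted[of 0 1] \<open>1 < n\<close> by simp
    then have "L ! 1 * (y0\<^sup>2 + y1\<^sup>2) \<le> L ! 0 * y0\<^sup>2 + L ! 1 * y1\<^sup>2"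
      by (simp add: distrib_left mult_right_mono)
    then show "L ! 1 * (\<Sum>j<n. (x j)\<^sup>2) \<le> (\<Sum>j<n. x j * (\<Sum>k<n. S j k * x k))"
      using sum_y[where f = "\<lambda>_. 1" and g = "\<lambda>u. u\<^sup>2"]
        sum_y[where f = "nth L" and g = "\<lambda>u. u\<^sup>2"]
      unfolding quadratic_form_coord[of x] sum_squares_coord[of x] by (simp add: x_coord)
  qed
qed

end

section \<open>The spectrum of the random walk\<close>

lemma degree_union: "degree n (\<lambda>u v. w1 u v + w2 u v) v = degree n w1 v + degree n w2 v"
  unfolding degree_def by (simp add: sum.distrib)

lemma multigraph_union:
  "multigraph n w1 \<Longrightarrow> multigraph n w2 \<Longrightarrow> multigraph n (\<lambda>u v. w1 u v + w2 u v)"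
  unfolding multigraph_def by auto

text \<open>The matrix \<open>D^(-1/2) W D^(-1/2)\<close> for the diagonal degree matrix \<open>D\<close>;
  it is symmetric and similar to the walk matrix \<open>D^(-1) W\<close>.\<close>

definition normalized_adjacency :: "nat \<Rightarrow> (nat \<Rightarrow> nat \<Rightarrow> nat) \<Rightarrow> real mat" where
  "normalized_adjacency n w =
    mat n n (\<lambda>(i, j). real (w i j) / sqrt (real (degree n w i) * real (degree n w j)))"

lemma normalized_adjacency_symmetric:
  "multigraph n w \<Longrightarrow> (normalized_adjacency n w)\<^sup>T = normalized_adjacency n w"
  unfolding multigraph_def normalized_adjacency_def by (auto simp: mult.commute)

lemma char_poly_walk_matrix:
  assumes pos: "\<forall>v<n. 0 < degree n w v"
  shows "char_poly (walk_matrix n w) = char_poly (normalized_adjacency n w)"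
proof -
  let ?s = "\<lambda>i. sqrt (real (degree n w i))"
  let ?N = "normalized_adjacency n w"
  define D where "D = mat_diag n ?s"
  define D' where "D' = mat_diag n (\<lambda>i. 1 / ?s i)"
  have N: "?N \<in> carrier_mat n n" unfolding normalized_adjacency_def by simp
  have d_pos: "degree n w i \<noteq> 0" "?s i > 0" if "i < n" for i using pos that by auto
  have D'D: "D' * D = 1\<^sub>m n" and DD': "D * D' = 1\<^sub>m n"
    unfolding D_def D'_def mat_diag_diag by (auto simp: mat_diag_def d_pos)
  have D: "D \<in> carrier_mat n n" "D' \<in> carrier_mat n n" unfolding D_def D'_def by simp_all
  have D'N: "D' * ?N = mat n n (\<lambda>(i, j). ?N $$ (i, j) / ?s i)"
    unfolding D'_def by (simp add: mat_diag_mult_left[OF N])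
  have D'ND: "D' * ?N * D = mat n n (\<lambda>(i, j). (D' * ?N) $$ (i, j) * ?s j)"
    unfolding D_def by (rule mat_diag_mult_right) (simp add: D'N)
  have walk: "walk_matrix n w = D' * ?N * D"
  proof (rule eq_matI)
    fix i j assume "i < dim_row (D' * ?N * D)" "j < dim_col (D' * ?N * D)"
    then have ij: "i < n" "j < n" using D by auto
    then have "(D' * ?N * D) $$ (i, j) = ?N $$ (i, j) / ?s i * ?s j" by (simp add: D'ND) (simp add: D'N)
    then show "walk_matrix n w $$ (i, j) = (D' * ?N * D) $$ (i, j)"
      using ij by (simp add: walk_matrix_def normalized_adjacency_def real_sqrt_mult d_pos field_simps)
  qed (use D in \<open>simp_all add: walk_matrix_def\<close>)
  have "similar_mat_wit (walk_matrix n w) ?N D' D"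
    by (rule similar_mat_witI[OF D'D DD' walk]) (use D N in \<open>auto simp: walk_matrix_def\<close>)
  then have "similar_mat (walk_matrix n w) ?N" unfolding similar_mat_def by blast
  then show ?thesis by (rule char_poly_similar)
qed

lemma proots_linear_factors: "proots (\<Prod>e\<leftarrow>es. [:-e, 1:]) = mset (es :: real list)"
proof (induct es)
  case (Cons e es)
  have "(\<Prod>e\<leftarrow>es. [:-e, 1:]) \<noteq> (0 :: real poly)" by auto
  then show ?case using Cons by (simp add: proots_mult del: mult_pCons_left)
qed simp

lemma walk_eigenvalues_orthonormal_eigenbasis:
  assumes mg: "multigraph n w" and pos: "\<forall>v<n. 0 < degree n w v"
  shows "\<And>i j. i \<le> j \<Longrightarrow> j < n \<Longrightarrow> walk_eigenvalues n w ! j \<le> walk_eigenvalues n w ! i"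
    and "\<exists>P. orthonormal_eigenbasis n (\<lambda>i j. normalized_adjacency n w $$ (i, j)) P (walk_eigenvalues n w)"
proof -
  let ?N = "normalized_adjacency n w"
  have N: "?N \<in> carrier_mat n n" unfolding normalized_adjacency_def by simp
  from symmetric_mat_char_poly_splits[OF N normalized_adjacency_symmetric[OF mg]]
  obtain es where cp: "char_poly ?N = (\<Prod>e\<leftarrow>es. [:-e, 1:])" and len: "length es = n" by blast
  have L: "walk_eigenvalues n w = rev (sort es)"
    unfolding walk_eigenvalues_def char_poly_walk_matrix[OF pos] cp proots_linear_factors
    by simp
  show "walk_eigenvalues n w ! j \<le> walk_eigenvalues n w ! i" if "i \<le> j" "j < n" for i j
    using sorted_rev_nth_mono[of "rev (sort es)" i j] that len unfolding L by simp
  have "char_poly ?N = (\<Prod>e\<leftarrow>walk_eigenvalues n w. [:-e, 1:])"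
    unfolding cp L by (simp add: prod_mset_prod_list[symmetric])
  from symmetric_mat_orthonormal_eigenbasis[OF N normalized_adjacency_symmetric[OF mg] this]
  show "\<exists>P. orthonormal_eigenbasis n (\<lambda>i j. ?N $$ (i, j)) P (walk_eigenvalues n w)" by blast
qed

section \<open>Quadratic forms of a multigraph\<close>

text \<open>In the notation of the random walk \<open>A\<close> and its degree-weighted inner product these are
  \<open>\<langle>A \<phi>, \<phi>\<rangle>\<close> and \<open>\<langle>\<phi>, \<phi>\<rangle>\<close>.\<close>

definition adjacency_form :: "nat \<Rightarrow> (nat \<Rightarrow> nat \<Rightarrow> nat) \<Rightarrow> (nat \<Rightarrow> real) \<Rightarrow> real" where
  "adjacency_form n w \<phi> = (\<Sum>j<n. \<Sum>k<n. real (w j k) * \<phi> j * \<phi> k)"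

definition degree_form :: "nat \<Rightarrow> (nat \<Rightarrow> nat \<Rightarrow> nat) \<Rightarrow> (nat \<Rightarrow> real) \<Rightarrow> real" where
  "degree_form n w \<phi> = (\<Sum>j<n. real (degree n w j) * (\<phi> j)\<^sup>2)"

lemma degree_form_pos:
  assumes "\<forall>v<n. 0 < degree n w v" and "v < n" "\<phi> v \<noteq> 0"
  shows "0 < degree_form n w \<phi>"
  unfolding degree_form_def
  by (rule sum_pos2[of _ v]) (use assms in auto)

lemma normalized_adjacency_forms:
  assumes pos: "\<forall>v<n. 0 < degree n w v"
    and x: "\<And>j. j < n \<Longrightarrow> x j = sqrt (real (degree n w j)) * \<phi> j"
  shows "(\<Sum>j<n. x j * (\<Sum>k<n. normalized_adjacency n w $$ (j, k) * x k)) = adjacency_form n w \<phi>"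
    and "(\<Sum>j<n. (x j)\<^sup>2) = degree_form n w \<phi>"
    and "(\<Sum>j<n. x j * t j) = (\<Sum>j<n. \<phi> j * (sqrt (real (degree n w j)) * t j))"
proof -
  have d_pos: "degree n w j \<noteq> 0" if "j < n" for j using pos that by simp
  show "(\<Sum>j<n. x j * (\<Sum>k<n. normalized_adjacency n w $$ (j, k) * x k)) = adjacency_form n w \<phi>"
    unfolding adjacency_form_def sum_distrib_left
    by (intro sum.cong refl) (simp add: x normalized_adjacency_def real_sqrt_mult d_pos field_simps)
  show "(\<Sum>j<n. (x j)\<^sup>2) = degree_form n w \<phi>"
    unfolding degree_form_def by (intro sum.cong refl) (simp add: x power_mult_distrib)
  show "(\<Sum>j<n. x j * t j) = (\<Sum>j<n. \<phi> j * (sqrt (real (degree n w j)) * t j))"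
    by (intro sum.cong refl) (simp add: x)
qed

lemma normalized_adjacency_sqrt_degree:
  assumes pos: "\<forall>v<n. 0 < degree n w v" and j: "j < n"
  shows "(\<Sum>k<n. normalized_adjacency n w $$ (j, k) * sqrt (real (degree n w k))) = sqrt (real (degree n w j))"
proof -
  have d_pos: "degree n w k \<noteq> 0" if "k < n" for k using pos that by simp
  have "(\<Sum>k<n. normalized_adjacency n w $$ (j, k) * sqrt (real (degree n w k)))
      = (\<Sum>k<n. real (w j k)) / sqrt (real (degree n w j))"
    unfolding sum_divide_distrib
    by (intro sum.cong refl) (simp add: normalized_adjacency_def real_sqrt_mult j d_pos)
  also have "\<dots> = sqrt (real (degree n w j))"
    unfolding degree_def of_nat_sum[symmetric] by (simp add: real_div_sqrt sum_nonneg)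
  finally show ?thesis .
qed

lemma adjacency_form_less_on_degree_complement:
  assumes mg: "multigraph n w" and pos: "\<forall>v<n. 0 < degree n w v"
    and "second_eigenvalue n w < 1" and "second_eigenvalue n w < c"
    and orth: "(\<Sum>v<n. real (degree n w v) * \<phi> v) = 0" and nonzero: "\<exists>v<n. \<phi> v \<noteq> 0"
  shows "adjacency_form n w \<phi> < c * degree_form n w \<phi>"
proof -
  let ?s = "\<lambda>j. sqrt (real (degree n w j))"
  let ?x = "\<lambda>j. ?s j * \<phi> j"
  obtain P where "orthonormal_eigenbasis n (\<lambda>i j. normalized_adjacency n w $$ (i, j)) P (walk_eigenvalues n w)"
    using walk_eigenvalues_orthonormal_eigenbasis(2)[OF mg pos] by blast
  then interpret orthonormal_eigenbasis n "\<lambda>i j. normalized_adjacency n w $$ (i, j)" P "walk_eigenvalues n w" .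
  note forms = normalized_adjacency_forms[OF pos, of ?x \<phi>]
  have "(\<Sum>j<n. ?x j * (\<Sum>k<n. normalized_adjacency n w $$ (j, k) * ?x k)) < c * (\<Sum>j<n. (?x j)\<^sup>2)"
  proof (rule quadratic_form_less_on_complement[where t = ?s])
    show "walk_eigenvalues n w ! j \<le> walk_eigenvalues n w ! i" if "i \<le> j" "j < n" for i j
      using walk_eigenvalues_orthonormal_eigenbasis(1)[OF mg pos that] .
    show "walk_eigenvalues n w ! 1 < 1" "walk_eigenvalues n w ! 1 < c"
      using assms(3,4) unfolding second_eigenvalue_def by auto
    show "(\<Sum>k<n. normalized_adjacency n w $$ (j, k) * ?s k) = ?s j" if "j < n" for j
      using normalized_adjacency_sqrt_degree[OF pos that] .
    show "\<exists>j<n. ?s j \<noteq> 0" using nonzero pos by auto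
    show "(\<Sum>j<n. ?x j * ?s j) = 0"
      using orth forms(3)[of ?s] by (simp add: mult.commute)
    show "\<exists>j<n. ?x j \<noteq> 0" using nonzero pos by auto
  qed
  then show ?thesis using forms(1,2) by simp
qed

lemma second_eigenvalue_less_if_adjacency_form_less:
  assumes mg: "multigraph n w" and pos: "\<forall>v<n. 0 < degree n w v" and "1 < n"
    and less: "\<And>\<phi>. (\<Sum>v<n. t v * \<phi> v) = 0 \<Longrightarrow> \<exists>v<n. \<phi> v \<noteq> 0 \<Longrightarrow>
      adjacency_form n w \<phi> < c * degree_form n w \<phi>"
  shows "second_eigenvalue n w < c"
proof -
  let ?s = "\<lambda>j. sqrt (real (degree n w j))"
  obtain P where "orthonormal_eigenbasis n (\<lambda>i j. normalized_adjacency n w $$ (i, j)) P (walk_eigenvalues n w)"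
    using walk_eigenvalues_orthonormal_eigenbasis(2)[OF mg pos] by blast
  then interpret orthonormal_eigenbasis n "\<lambda>i j. normalized_adjacency n w $$ (i, j)" P "walk_eigenvalues n w" .
  obtain x where orth: "(\<Sum>j<n. x j * (t j / ?s j)) = 0" and nonzero: "\<exists>j<n. x j \<noteq> 0"
    and ge: "walk_eigenvalues n w ! 1 * (\<Sum>j<n. (x j)\<^sup>2)
      \<le> (\<Sum>j<n. x j * (\<Sum>k<n. normalized_adjacency n w $$ (j, k) * x k))"
    by (rule exists_quadratic_form_ge_second[OF \<open>1 < n\<close> walk_eigenvalues_orthonormal_eigenbasis(1)[OF mg pos]])
  define \<phi> where "\<phi> j = x j / ?s j" for j
  have x: "x j = ?s j * \<phi> j" if "j < n" for j using pos that by (simp add: \<phi>_def)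
  note forms = normalized_adjacency_forms[OF pos x]
  have "(\<Sum>v<n. t v * \<phi> v) = 0"
    using orth forms(3)[of "\<lambda>j. t j / ?s j"] pos by (simp add: mult.commute)
  moreover obtain v where v: "v < n" "\<phi> v \<noteq> 0" using nonzero x by fastforce
  ultimately have "adjacency_form n w \<phi> < c * degree_form n w \<phi>" using less by blast
  moreover have "second_eigenvalue n w * degree_form n w \<phi> \<le> adjacency_form n w \<phi>"
    using ge forms(1,2) unfolding second_eigenvalue_def by simp
  ultimately have "second_eigenvalue n w * degree_form n w \<phi> < c * degree_form n w \<phi>" by linarith
  moreover have "0 < degree_form n w \<phi>" using degree_form_pos[of n w v \<phi>] pos v by blast
  ultimately show ?thesis by simp
qed

lemma adjacency_form_eq_degree_form_if_constant_on_edges: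
  assumes "\<And>j k. j < n \<Longrightarrow> k < n \<Longrightarrow> 0 < w j k \<Longrightarrow> \<phi> j = \<phi> k"
  shows "adjacency_form n w \<phi> = degree_form n w \<phi>"
proof -
  have "adjacency_form n w \<phi> = (\<Sum>j<n. \<Sum>k<n. real (w j k) * \<phi> j * \<phi> j)"
    unfolding adjacency_form_def using assms by (intro sum.cong refl) (metis gr0I mult_zero_left of_nat_0 lessThan_iff)
  then show ?thesis
    unfolding degree_form_def degree_def by (simp add: sum_distrib_right power2_eq_square mult.assoc)
qed

lemma not_graph_connected_obtains_locally_constant:
  assumes mg: "multigraph n w" and "\<not> graph_connected n w" and pos: "\<forall>v<n. 0 < t v"
  obtains \<phi> :: "nat \<Rightarrow> real" where "(\<Sum>v<n. t v * \<phi> v) = 0" and "\<exists>v<n. \<phi> v \<noteq> 0"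
    and "\<And>j k. j < n \<Longrightarrow> k < n \<Longrightarrow> 0 < w j k \<Longrightarrow> \<phi> j = \<phi> k"
proof -
  from assms(2) obtain u0 v0 where uv: "u0 < n" "v0 < n" "(u0, v0) \<notin> (adj_rel n w)\<^sup>*"
    unfolding graph_connected_def by blast
  define C where "C = {v. (u0, v) \<in> (adj_rel n w)\<^sup>*}"
  define a where "a = (\<Sum>v<n. if v \<in> C then 0 else t v)"
  define b where "b = (\<Sum>v<n. if v \<in> C then t v else 0)"
  \<comment> \<open>the component \<open>C\<close> of \<open>u0\<close> gets the value \<open>a\<close> and the rest \<open>-b\<close>,
    which balances the \<open>t\<close>-weighted sum\<close>
  define \<phi> where "\<phi> v = (if v \<in> C then a else - b)" for v
  have "u0 \<in> C" "v0 \<notin> C" using uv unfolding C_def by auto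
  have "a > 0" unfolding a_def
    by (rule sum_pos2[of _ v0]) (use uv \<open>v0 \<notin> C\<close> pos in \<open>auto simp: less_imp_le\<close>)
  show ?thesis
  proof
    have "(\<Sum>v<n. t v * \<phi> v) = (\<Sum>v<n. a * (if v \<in> C then t v else 0) - b * (if v \<in> C then 0 else t v))"
      unfolding \<phi>_def by (intro sum.cong) auto
    then show "(\<Sum>v<n. t v * \<phi> v) = 0"
      unfolding sum_subtractf sum_distrib_left[symmetric] a_def b_def by simp
    show "\<exists>v<n. \<phi> v \<noteq> 0" using uv \<open>u0 \<in> C\<close> \<open>a > 0\<close> unfolding \<phi>_def by auto
    fix j k assume "j < n" "k < n" "0 < w j k"
    then have "(j, k) \<in> adj_rel n w" "(k, j) \<in> adj_rel n w"
      using mg unfolding adj_rel_def multigraph_def by auto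
    then have "j \<in> C \<longleftrightarrow> k \<in> C" unfolding C_def mem_Collect_eq by (meson rtrancl_into_rtrancl)
    then show "\<phi> j = \<phi> k" unfolding \<phi>_def by simp
  qed
qed

lemma graph_connected_if_second_eigenvalue_less_1:
  assumes mg: "multigraph n w" and pos: "\<forall>v<n. 0 < degree n w v"
    and "second_eigenvalue n w < 1"
  shows "graph_connected n w"
proof (rule ccontr)
  assume "\<not> graph_connected n w"
  from not_graph_connected_obtains_locally_constant[OF mg this, of "\<lambda>v. real (degree n w v)"] pos
  obtain \<phi> where orth: "(\<Sum>v<n. real (degree n w v) * \<phi> v) = 0" and nonzero: "\<exists>v<n. \<phi> v \<noteq> 0"
    and const: "\<And>j k. j < n \<Longrightarrow> k < n \<Longrightarrow> 0 < w j k \<Longrightarrow> \<phi> j = \<phi> k" by auto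
  have "adjacency_form n w \<phi> < 1 * degree_form n w \<phi>"
    using adjacency_form_less_on_degree_complement[OF mg pos assms(3) assms(3) orth nonzero] .
  with adjacency_form_eq_degree_form_if_constant_on_edges[OF const] show False by simp
qed

lemma adjacency_form_lower_bound:
  assumes "multigraph n w"
  shows "- degree_form n w \<phi> \<le> adjacency_form n w \<phi>"
proof -
  have sym: "(\<Sum>j<n. \<Sum>k<n. real (w j k) * (\<phi> k)\<^sup>2) = degree_form n w \<phi>"
    using assms unfolding degree_form_def degree_def multigraph_def
    by (subst sum.swap) (simp add: sum_distrib_right)
  have "0 \<le> (\<Sum>j<n. \<Sum>k<n. real (w j k) * (\<phi> j + \<phi> k)\<^sup>2)"
    by (intro sum_nonneg) auto
  also have "\<dots> = degree_form n w \<phi> + 2 * adjacency_form n w \<phi> + (\<Sum>j<n. \<Sum>k<n. real (w j k) * (\<phi> k)\<^sup>2)"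
    unfolding degree_form_def degree_def adjacency_form_def
    by (simp add: power2_eq_square algebra_simps sum.distrib sum_distrib_left sum_distrib_right)
  finally show ?thesis using sym by simp
qed

lemma adjacency_form_delete_edges:
  assumes mg2: "multigraph n w2" and "c \<le> 1"
    and ratio: "\<forall>v<n. real (degree n w2 v) \<le> eps * real (degree n w1 v)"
    and less: "adjacency_form n (\<lambda>u v. w1 u v + w2 u v) \<phi> < c * degree_form n (\<lambda>u v. w1 u v + w2 u v) \<phi>"
  shows "adjacency_form n w1 \<phi> < (c + 2 * eps) * degree_form n w1 \<phi>"
proof -
  have A: "adjacency_form n (\<lambda>u v. w1 u v + w2 u v) \<phi> = adjacency_form n w1 \<phi> + adjacency_form n w2 \<phi>"
    unfolding adjacency_form_def by (simp add: algebra_simps sum.distrib)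
  have D: "degree_form n (\<lambda>u v. w1 u v + w2 u v) \<phi> = degree_form n w1 \<phi> + degree_form n w2 \<phi>"
    unfolding degree_form_def degree_union by (simp add: algebra_simps sum.distrib)
  have D2: "degree_form n w2 \<phi> \<le> eps * degree_form n w1 \<phi>"
    unfolding degree_form_def sum_distrib_left
    by (intro sum_mono) (use ratio in \<open>auto simp: mult.assoc[symmetric] intro: mult_right_mono\<close>)
  have "0 \<le> degree_form n w2 \<phi>" unfolding degree_form_def by (simp add: sum_nonneg)
  have "adjacency_form n w1 \<phi> < c * degree_form n w1 \<phi> + (c + 1) * degree_form n w2 \<phi>"
    using less adjacency_form_lower_bound[OF mg2, of \<phi>] unfolding A D by (simp add: algebra_simps)
  also have "(c + 1) * degree_form n w2 \<phi> \<le> 2 * degree_form n w2 \<phi>"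
    using \<open>c \<le> 1\<close> \<open>0 \<le> degree_form n w2 \<phi>\<close> by (intro mult_right_mono) auto
  also have "\<dots> \<le> 2 * (eps * degree_form n w1 \<phi>)" using D2 by simp
  finally show ?thesis by (simp add: algebra_simps)
qed

theorem lemma4p12:
  fixes n :: nat and w1 w2 :: "nat \<Rightarrow> nat \<Rightarrow> nat" and lam eps :: real
  assumes "2 \<le> n"
    and "multigraph n w1" and "multigraph n w2"
    and "0 \<le> lam" and "lam < 1" and "0 \<le> eps" and "eps < 1"
    and "graph_connected n (\<lambda>u v. w1 u v + w2 u v)"
    and "second_eigenvalue n (\<lambda>u v. w1 u v + w2 u v) < lam"
    and "\<forall>v<n. 0 < degree n w1 v \<and> real (degree n w2 v) / real (degree n w1 v) \<le> eps"
    and "eps < (1 - lam) / 4"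
  shows "graph_connected n w1 \<and> second_eigenvalue n w1 < lam + 4 * eps"
proof -
  let ?w = "\<lambda>u v. w1 u v + w2 u v"
  have mg: "multigraph n ?w" using multigraph_union assms(2,3) .
  have pos1: "\<forall>v<n. 0 < degree n w1 v" using assms(10) by blast
  then have pos: "\<forall>v<n. 0 < degree n ?w v" by (simp add: degree_union)
  have ratio: "\<forall>v<n. real (degree n w2 v) \<le> eps * real (degree n w1 v)"
    using assms(10) by (simp add: divide_le_eq)
  have "second_eigenvalue n w1 < lam + 2 * eps"
  proof (rule second_eigenvalue_less_if_adjacency_form_less[OF assms(2) pos1])
    show "1 < n" using assms(1) by simp
    fix \<phi> assume "(\<Sum>v<n. real (degree n ?w v) * \<phi> v) = 0" "\<exists>v<n. \<phi> v \<noteq> 0"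
    with adjacency_form_less_on_degree_complement[OF mg pos] assms(5,9)
    have "adjacency_form n ?w \<phi> < lam * degree_form n ?w \<phi>" by simp
    then show "adjacency_form n w1 \<phi> < (lam + 2 * eps) * degree_form n w1 \<phi>"
      by (rule adjacency_form_delete_edges[OF assms(3) less_imp_le[OF assms(5)] ratio])
  qed
  then have "second_eigenvalue n w1 < lam + 4 * eps" using assms(6) by simp
  moreover have "lam + 4 * eps < 1" using assms(11) by simp
  ultimately show ?thesis
    using graph_connected_if_second_eigenvalue_less_1[OF assms(2) pos1] by simp
qed

end
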